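(* Let $\mathcal{P}$ be a poset with at least two elements having the Unique Cover Twin Property, let $n\ge 3$, and let $\mathcal{F}$ be an induced-$\mathcal{P}$-saturated family in $\mathcal{B}_n$. If there exist distinct $x,y\in[n]$ such that no $F\in\mathcal{F}$ satisfies $|F\cap\{x,y\}|=1$, then $F\cap\{x,y\}=\emptyset$ for all $F\in\mathcal{F}$.
   Context: In a poset $(P,\le)$, $y$ covers $x$ if $x<y$ and there is no $z$ with $x<z<y$. A poset $\mathcal{P}=(P,\le)$ has the Unique Cover Twin Property (UCTP) if for every $S\in P$ that has exactly one cover $T\in P$, there exists $S'\in P$ with $S'\ne S$ such that $T$ also covers $S'$. $\mathcal{B}_n$ denotes the Boolean lattice $(2^{[n]},\subseteq)$. A family $\mathcal{F}\subseteq 2^{[n]}$ (ordered by inclusion) is induced-$\mathcal{P}$-saturated if it contains no induced copy of $\mathcal{P}$ (an injection $f$ with $u\le v\iff f(u)\subseteq f(v)$) but every family $\mathcal{F}'$ with $\mathcal{F}\subsetneq\mathcal{F}'\subseteq 2^{[n]}$ contains one. *)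

theory Defs
  imports Main
begin

definition covers :: "('a \<times> 'a) set \<Rightarrow> 'a \<Rightarrow> 'a \<Rightarrow> bool" where
  "covers r x y \<longleftrightarrow> (x, y) \<in> r \<and> x \<noteq> y \<and>
     \<not> (\<exists>z. (x, z) \<in> r \<and> (z, y) \<in> r \<and> z \<noteq> x \<and> z \<noteq> y)"

definition UCTP :: "'a set \<Rightarrow> ('a \<times> 'a) set \<Rightarrow> bool" where
  "UCTP P r \<longleftrightarrow> (\<forall>S\<in>P. \<forall>T\<in>P.
     (covers r S T \<and> (\<forall>T'\<in>P. covers r S T' \<longrightarrow> T' = T))
       \<longrightarrow> (\<exists>S'\<in>P. S' \<noteq> S \<and> covers r S' T))"

definition contains_induced :: "'a set \<Rightarrow> ('a \<times> 'a) set \<Rightarrow> 'b set set \<Rightarrow> bool" where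
  "contains_induced P r \<F> \<longleftrightarrow> (\<exists>f. inj_on f P \<and> f ` P \<subseteq> \<F> \<and>
     (\<forall>u\<in>P. \<forall>v\<in>P. (u, v) \<in> r \<longleftrightarrow> f u \<subseteq> f v))"

definition induced_saturated :: "nat \<Rightarrow> 'a set \<Rightarrow> ('a \<times> 'a) set \<Rightarrow> nat set set \<Rightarrow> bool" where
  "induced_saturated n P r \<F> \<longleftrightarrow> \<F> \<subseteq> Pow {1..n} \<and> \<not> contains_induced P r \<F> \<and>
     (\<forall>\<F>'. \<F> \<subset> \<F>' \<and> \<F>' \<subseteq> Pow {1..n} \<longrightarrow> contains_induced P r \<F>')"

end

theory Submission
  imports Defs
begin

text \<open>Since no member of \<open>\<F>\<close> separates \<open>x\<close> and \<open>y\<close>, an inclusion-minimal member \<open>F\<close> containing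
  \<open>x\<close> also contains \<open>y\<close>, and \<open>A = F - {y}\<close> is a lower twin of \<open>F\<close>: it lies outside \<open>\<F>\<close>, every
  member above \<open>A\<close> is above \<open>F\<close>, and every member strictly below \<open>F\<close> is below \<open>A\<close>. By saturation
  \<open>\<F> \<union> {A}\<close> contains an induced copy of \<open>P\<close>, which must use \<open>A\<close>; it must also use \<open>F\<close>, since
  otherwise \<open>F\<close> could replace \<open>A\<close>. The element mapped to \<open>A\<close> then has the element mapped to \<open>F\<close> as
  its unique cover, and the twin supplied by the UCTP would be mapped strictly below \<open>F\<close>, hence
  below \<open>A\<close>, which contradicts it being covered.\<close>

definition induced_embedding ::
  "'a set \<Rightarrow> ('a \<times> 'a) set \<Rightarrow> ('a \<Rightarrow> 'b set) \<Rightarrow> 'b set set \<Rightarrow> bool" where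
  "induced_embedding P r f \<F> \<longleftrightarrow> inj_on f P \<and> f ` P \<subseteq> \<F> \<and>
     (\<forall>u\<in>P. \<forall>v\<in>P. (u, v) \<in> r \<longleftrightarrow> f u \<subseteq> f v)"

lemma contains_induced_iff_embedding:
  "contains_induced P r \<F> \<longleftrightarrow> (\<exists>f. induced_embedding P r f \<F>)"
  unfolding contains_induced_def induced_embedding_def ..

lemma induced_embeddingD:
  assumes "induced_embedding P r f \<F>"
  shows "inj_on f P" and "u \<in> P \<Longrightarrow> f u \<in> \<F>"
    and "u \<in> P \<Longrightarrow> v \<in> P \<Longrightarrow> (u, v) \<in> r \<longleftrightarrow> f u \<subseteq> f v"
  using assms unfolding induced_embedding_def by auto

definition lower_twin :: "'b set set \<Rightarrow> 'b set \<Rightarrow> 'b set \<Rightarrow> bool" where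
  "lower_twin \<F> A F \<longleftrightarrow> F \<in> \<F> \<and> A \<subset> F \<and>
     (\<forall>G\<in>\<F>. A \<subseteq> G \<longrightarrow> F \<subseteq> G) \<and> (\<forall>G\<in>\<F>. G \<subset> F \<longrightarrow> G \<subseteq> A)"

lemma lower_twin_not_member: "lower_twin \<F> A F \<Longrightarrow> A \<notin> \<F>"
  unfolding lower_twin_def by blast

lemma induced_embedding_insert_other:
  assumes "induced_embedding P r f (insert A \<F>)" "u \<in> P" "f u = A" "v \<in> P" "v \<noteq> u"
  shows "f v \<in> \<F>"
proof -
  have "f v \<noteq> f u"
    using inj_onD[OF induced_embeddingD(1)[OF assms(1)] _ assms(4,2)] assms(5) by blast
  then show ?thesis
    using induced_embeddingD(2)[OF assms(1,4)] assms(3) by simp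
qed

lemma induced_embedding_insert_hits:
  assumes "induced_embedding P r f (insert A \<F>)" "\<not> contains_induced P r \<F>"
  obtains u where "u \<in> P" "f u = A"
proof -
  have "\<not> induced_embedding P r f \<F>"
    using assms(2) unfolding contains_induced_iff_embedding by blast
  then have "\<not> f ` P \<subseteq> \<F>"
    using assms(1) by (simp add: induced_embedding_def)
  then obtain u where "u \<in> P" "f u \<notin> \<F>" by blast
  then show thesis
    using that induced_embeddingD(2)[OF assms(1)] by blast
qed

lemma induced_embedding_replace_lower_twin:
  assumes f: "induced_embedding P r f (insert A \<F>)" and twin: "lower_twin \<F> A F"
    and u: "u \<in> P" "f u = A" and F_unused: "F \<notin> f ` P"
  shows "induced_embedding P r (f(u := F)) \<F>"
proof -
  have other: "\<And>v. v \<in> P \<Longrightarrow> v \<noteq> u \<Longrightarrow> f v \<in> \<F>"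
    using induced_embedding_insert_other[OF f u] by blast
  have order: "(v, w) \<in> r \<longleftrightarrow> (f(u := F)) v \<subseteq> (f(u := F)) w" if "v \<in> P" "w \<in> P" for v w
  proof -
    have "f v \<subseteq> A \<longleftrightarrow> f v \<subseteq> F" if "v \<in> P" "v \<noteq> u"
      using twin other[OF that] F_unused that(1) unfolding lower_twin_def by blast
    moreover have "A \<subseteq> f w \<longleftrightarrow> F \<subseteq> f w" if "w \<in> P" "w \<noteq> u"
      using twin other[OF that] unfolding lower_twin_def by blast
    ultimately show ?thesis
      using induced_embeddingD(3)[OF f \<open>v \<in> P\<close> \<open>w \<in> P\<close>] that u by auto
  qed
  have "inj_on (f(u := F)) P"
    using induced_embeddingD(1)[OF f] F_unused unfolding inj_on_def by auto
  moreover have "(f(u := F)) ` P \<subseteq> \<F>"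
    using other twin unfolding lower_twin_def by auto
  ultimately show ?thesis
    using order unfolding induced_embedding_def by blast
qed

lemma lower_twin_unique_cover:
  assumes r: "r \<subseteq> P \<times> P" and f: "induced_embedding P r f (insert A \<F>)"
    and twin: "lower_twin \<F> A F"
    and u: "u \<in> P" "f u = A" and t: "t \<in> P" "f t = F"
  shows "covers r u t" and "\<forall>T\<in>P. covers r u T \<longrightarrow> T = t"
proof -
  have ut: "(u, t) \<in> r" "u \<noteq> t"
    using twin induced_embeddingD(3)[OF f u(1) t(1)] u t unfolding lower_twin_def by auto
  have above: "(t, z) \<in> r" if "(u, z) \<in> r" "z \<noteq> u" for z
  proof -
    have "z \<in> P" using r that(1) by blast
    then have "f z \<in> \<F>" "A \<subseteq> f z"
      using induced_embedding_insert_other[OF f u] induced_embeddingD(3)[OF f u(1)] that u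
      by auto
    then show ?thesis
      using twin induced_embeddingD(3)[OF f t(1) \<open>z \<in> P\<close>] t unfolding lower_twin_def by blast
  qed
  have no_between: "\<not> ((u, z) \<in> r \<and> (z, t) \<in> r \<and> z \<noteq> u \<and> z \<noteq> t)" for z
  proof
    assume z: "(u, z) \<in> r \<and> (z, t) \<in> r \<and> z \<noteq> u \<and> z \<noteq> t"
    then have "z \<in> P" using r by blast
    have "f z = f t"
      using above z induced_embeddingD(3)[OF f] \<open>z \<in> P\<close> t(1) by blast
    then show False
      using inj_onD[OF induced_embeddingD(1)[OF f] _ \<open>z \<in> P\<close> t(1)] z by blast
  qed
  then show "covers r u t"
    using ut unfolding covers_def by blast
  show "\<forall>T\<in>P. covers r u T \<longrightarrow> T = t"
    using above ut no_between unfolding covers_def by blast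
qed

theorem UCTP_lower_twin_induced_free:
  assumes r: "r \<subseteq> P \<times> P" and uctp: "UCTP P r" and twin: "lower_twin \<F> A F"
    and free: "\<not> contains_induced P r \<F>"
  shows "\<not> contains_induced P r (insert A \<F>)"
proof
  assume "contains_induced P r (insert A \<F>)"
  then obtain f where f: "induced_embedding P r f (insert A \<F>)"
    unfolding contains_induced_iff_embedding by blast
  obtain u where u: "u \<in> P" "f u = A"
    using induced_embedding_insert_hits[OF f free] .
  have "F \<in> f ` P"
    using induced_embedding_replace_lower_twin[OF f twin u] free
    unfolding contains_induced_iff_embedding by blast
  then obtain t where t: "t \<in> P" "f t = F" by blast
  note cover = lower_twin_unique_cover[OF r f twin u t]
  obtain S where S: "S \<in> P" "S \<noteq> u" "covers r S t"
    using uctp u(1) t(1) cover unfolding UCTP_def by blast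
  have "f S \<subset> F"
    using S t induced_embeddingD[OF f] unfolding covers_def inj_on_def by blast
  then have "f S \<subseteq> A"
    using twin induced_embedding_insert_other[OF f u S(1,2)] unfolding lower_twin_def by blast
  then have "(S, u) \<in> r"
    using induced_embeddingD(3)[OF f S(1) u(1)] u by simp
  then show False
    using S cover(1) unfolding covers_def by blast
qed

lemma lower_twin_delete:
  assumes "x \<noteq> y" "\<forall>G\<in>\<F>. x \<in> G \<longleftrightarrow> y \<in> G"
    and "F \<in> \<F>" "x \<in> F" "\<forall>G\<in>\<F>. G \<subset> F \<longrightarrow> x \<notin> G"
  shows "lower_twin \<F> (F - {y}) F"
  using assms unfolding lower_twin_def by blast

lemma card_inter_doubleton_neq_1:
  assumes "x \<noteq> y" "card (F \<inter> {x, y}) \<noteq> 1"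
  shows "x \<in> F \<longleftrightarrow> y \<in> F"
proof (rule ccontr)
  assume "\<not> (x \<in> F \<longleftrightarrow> y \<in> F)"
  then have "F \<inter> {x, y} = {x} \<or> F \<inter> {x, y} = {y}" using assms(1) by blast
  with assms(2) show False by auto
qed

lemma finite_family_inclusion_minimal:
  fixes \<F> :: "'b set set"
  assumes "finite \<F>" "F0 \<in> \<F>" "Q F0"
  obtains F where "F \<in> \<F>" "Q F" "\<forall>G\<in>\<F>. G \<subset> F \<longrightarrow> \<not> Q G"
proof -
  obtain F where "F \<in> {G \<in> \<F>. Q G}" and "\<forall>G\<in>{G \<in> \<F>. Q G}. G \<subseteq> F \<longrightarrow> F = G"
    using finite_has_minimal[of "{G \<in> \<F>. Q G}"] assms by auto
  then show thesis
    using that by blast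
qed

lemma induced_saturated_insert:
  assumes "induced_saturated n P r \<F>" "A \<subseteq> {1..n}" "A \<notin> \<F>"
  shows "contains_induced P r (insert A \<F>)"
  using assms unfolding induced_saturated_def by blast

theorem lemma3p7:
  fixes P :: "'a set" and r :: "('a \<times> 'a) set" and n :: nat
    and \<F> :: "nat set set" and x y :: nat
  assumes "partial_order_on P r"
    and "\<exists>a\<in>P. \<exists>b\<in>P. a \<noteq> b"
    and "UCTP P r"
    and "n \<ge> 3"
    and "induced_saturated n P r \<F>"
    and "x \<in> {1..n}" and "y \<in> {1..n}" and "x \<noteq> y"
    and "\<forall>F\<in>\<F>. card (F \<inter> {x, y}) \<noteq> 1"
  shows "\<forall>F\<in>\<F>. F \<inter> {x, y} = {}"
proof (rule ccontr)
  assume "\<not> (\<forall>F\<in>\<F>. F \<inter> {x, y} = {})"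
  have inseparable: "\<forall>G\<in>\<F>. x \<in> G \<longleftrightarrow> y \<in> G"
  proof
    fix G assume "G \<in> \<F>"
    then show "x \<in> G \<longleftrightarrow> y \<in> G"
      using card_inter_doubleton_neq_1[OF assms(8)] assms(9) by blast
  qed
  with \<open>\<not> (\<forall>F\<in>\<F>. F \<inter> {x, y} = {})\<close> obtain F0 where "F0 \<in> \<F>" "x \<in> F0"
    by blast
  have sub: "\<F> \<subseteq> Pow {1..n}" and free: "\<not> contains_induced P r \<F>"
    using assms(5) by (simp_all add: induced_saturated_def)
  obtain F where F: "F \<in> \<F>" "x \<in> F" and minimal: "\<forall>G\<in>\<F>. G \<subset> F \<longrightarrow> x \<notin> G"
    using finite_family_inclusion_minimal[OF finite_subset[OF sub] \<open>F0 \<in> \<F>\<close>, of "\<lambda>G. x \<in> G"]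
      \<open>x \<in> F0\<close> by auto
  have twin: "lower_twin \<F> (F - {y}) F"
    using lower_twin_delete[OF assms(8) inseparable F minimal] .
  have "contains_induced P r (insert (F - {y}) \<F>)"
    using induced_saturated_insert[OF assms(5) _ lower_twin_not_member[OF twin]] sub F(1) by auto
  with UCTP_lower_twin_induced_free[OF partial_order_onD(4)[OF assms(1)] assms(3) twin free]
  show False ..
qed

end
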